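(* Let $T$ be an LMSR tree with liquidity parameter $b>0$, let $\alpha\in\Omega$, and let $I=[\alpha,1)$. Consider the following procedure (Algorithm 1). Initialize $z\gets\mathit{root}$, $P\gets 1$, $\mathit{price}\gets 0$. While $\alpha_z\neq\alpha$ and $z$ is not a leaf: set $P\gets P\,e^{s_z/b}$; if $\alpha<\alpha_{\mathrm{right}(z)}$ then set $\mathit{price}\gets\mathit{price}+P\,S_{\mathrm{right}(z)}/S_{\mathit{root}}$ and $z\gets\mathrm{left}(z)$, otherwise set $z\gets\mathrm{right}(z)$. After the loop, return $$\mathit{price}+\frac{\beta_z-\alpha}{\beta_z-\alpha_z}\cdot \frac{P\,S_z}{S_{\mathit{root}}}.$$ Then the procedure returns exactly the LMSR price $p_{I\cap\Omega}(\boldsymbol\theta(T))$ of the bundle security for $I$ in the market state $\boldsymbol\theta(T)$ represented by $T$, and it runs in time $\mathcal O(\log n_{\mathit{vals}})$ (counting arithmetic operations, including exponentials, as unit cost), where $n_{\mathit{vals}}=|\{\alpha_z: z\in T\}|$ is the number of distinct left endpoints of node intervals of $T$.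
   Context: Fix an integer $K\ge 1$, $N=2^K$, and the outcome set $\Omega=\{j/N: j=0,1,\dots,N-1\}$. Fix a liquidity parameter $b>0$. For a state $\boldsymbol\theta\in\mathbb R^{\Omega}$ and an event $E\subseteq\Omega$, the LMSR price of the bundle security for $E$ is $p_E(\boldsymbol\theta)=\sum_{\omega\in E}e^{\theta_\omega/b}\big/\sum_{\nu\in\Omega}e^{\theta_\nu/b}$. An interval $[\alpha,\beta)$ is identified with the event $[\alpha,\beta)\cap\Omega$. An LMSR tree is a full binary tree (every node $z$ is either a leaf or has exactly two children $\mathrm{left}(z)$, $\mathrm{right}(z)$) in which each node $z$ carries an interval $I_z=[\alpha_z,\beta_z)$ with $\alpha_z,\beta_z\in\Omega\cup\{1\}$, a height $h_z\ge 0$, a real number $s_z$ (shares held at $z$), and a number $S_z\ge 0$ (partial normalization constant), such that: (i) binary-search property: $I_{\mathit{root}}=[0,1)$ and for every inner node $z$, $\alpha_z=\alpha_{\mathrm{left}(z)}<\beta_{\mathrm{left}(z)}=\alpha_{\mathrm{right}(z)}<\beta_{\mathrm{right}(z)}=\beta_z$; (ii) height balance: $h_z=0$ for leaves and, for inner $z$, $h_z=1+\max\{h_{\mathrm{left}(z)},h_{\mathrm{right}(z)}\}$ and $|h_{\mathrm{left}(z)}-h_{\mathrm{right}(z)}|\le 1$; (iii) partial-normalization correctness: $S_z=e^{s_z/b}(\beta_z-\alpha_z)$ for leaves and $S_z=e^{s_z/b}(S_{\mathrm{left}(z)}+S_{\mathrm{right}(z)})$ for inner nodes. The market state represented by $T$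 is $\boldsymbol\theta(T)\in\mathbb R^\Omega$ with $\theta_\omega(T)=\sum_{z\in T:\ \omega\in I_z}s_z$. *)

theory Defs
  imports Complex_Main
begin

definition Omega :: "nat \<Rightarrow> real set" where
  "Omega K = {real j / 2 ^ K | j. j < (2::nat) ^ K}"

definition lmsr_price :: "nat \<Rightarrow> real \<Rightarrow> (real \<Rightarrow> real) \<Rightarrow> real set \<Rightarrow> real" where
  "lmsr_price K b theta E =
     (\<Sum>\<omega>\<in>E. exp (theta \<omega> / b)) / (\<Sum>\<nu>\<in>Omega K. exp (theta \<nu> / b))"

text \<open>Tree nodes carry: alpha, beta (interval [alpha,beta)), height h, shares s,
  partial normalisation constant S.\<close>
datatype ltree =
    Leaf real real nat real real
  | Node real real nat real real ltree ltree

fun alpha :: "ltree \<Rightarrow> real" where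
  "alpha (Leaf a _ _ _ _) = a" | "alpha (Node a _ _ _ _ _ _) = a"
fun beta :: "ltree \<Rightarrow> real" where
  "beta (Leaf _ c _ _ _) = c" | "beta (Node _ c _ _ _ _ _) = c"
fun hgt :: "ltree \<Rightarrow> nat" where
  "hgt (Leaf _ _ h _ _) = h" | "hgt (Node _ _ h _ _ _ _) = h"
fun shares :: "ltree \<Rightarrow> real" where
  "shares (Leaf _ _ _ s _) = s" | "shares (Node _ _ _ s _ _ _) = s"
fun pnorm :: "ltree \<Rightarrow> real" where
  "pnorm (Leaf _ _ _ _ S) = S" | "pnorm (Node _ _ _ _ S _ _) = S"

text \<open>Local well-formedness of every node (conditions (ii), (iii), the inner-node part of (i),
  endpoints in Omega \<union> {1}, and S \<ge> 0).\<close>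
fun wf_tree :: "nat \<Rightarrow> real \<Rightarrow> ltree \<Rightarrow> bool" where
  "wf_tree K b (Leaf a c h s S) \<longleftrightarrow>
     a \<in> Omega K \<union> {1} \<and> c \<in> Omega K \<union> {1} \<and> S \<ge> 0 \<and>
     h = 0 \<and> S = exp (s / b) * (c - a)"
| "wf_tree K b (Node a c h s S l r) \<longleftrightarrow>
     a \<in> Omega K \<union> {1} \<and> c \<in> Omega K \<union> {1} \<and> S \<ge> 0 \<and>
     a = alpha l \<and> alpha l < beta l \<and> beta l = alpha r \<and> alpha r < beta r \<and> beta r = c \<and>
     h = 1 + max (hgt l) (hgt r) \<and> \<bar>int (hgt l) - int (hgt r)\<bar> \<le> 1 \<and>
     S = exp (s / b) * (pnorm l + pnorm r) \<and>
     wf_tree K b l \<and> wf_tree K b r"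

definition lmsr_tree :: "nat \<Rightarrow> real \<Rightarrow> ltree \<Rightarrow> bool" where
  "lmsr_tree K b T \<longleftrightarrow> alpha T = 0 \<and> beta T = 1 \<and> wf_tree K b T"

fun theta :: "ltree \<Rightarrow> real \<Rightarrow> real" where
  "theta (Leaf a c _ s _) \<omega> = (if a \<le> \<omega> \<and> \<omega> < c then s else 0)"
| "theta (Node a c _ s _ l r) \<omega> =
     (if a \<le> \<omega> \<and> \<omega> < c then s else 0) + theta l \<omega> + theta r \<omega>"

fun alphas :: "ltree \<Rightarrow> real set" where
  "alphas (Leaf a _ _ _ _) = {a}"
| "alphas (Node a _ _ _ _ l r) = {a} \<union> alphas l \<union> alphas r"

text \<open>Algorithm 1. The loop state is (z, P, price); the last component counts arithmetic
  operations (comparisons, +, *, /, exp, each unit cost).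
  Each loop test costs 2; an iteration costs 3 (P update: division, exp, product),
  1 for the comparison, and 3 more (product, division, sum) when the price is updated.
  The final return costs 7.\<close>
fun alg_loop :: "real \<Rightarrow> real \<Rightarrow> real \<Rightarrow> ltree \<Rightarrow> real \<Rightarrow> real \<Rightarrow> nat \<Rightarrow> real \<times> nat" where
  "alg_loop b a Sroot (Leaf az bz h s S) P price ops =
     (price + (bz - a) / (bz - az) * (P * S / Sroot), ops + 2 + 7)"
| "alg_loop b a Sroot (Node az bz h s S l r) P price ops =
     (if az = a then (price + (bz - a) / (bz - az) * (P * S / Sroot), ops + 2 + 7)
      else (let P' = P * exp (s / b) in
            if a < alpha r
            then alg_loop b a Sroot l P' (price + P' * pnorm r / Sroot) (ops + 2 + 3 + 1 + 3)
            else alg_loop b a Sroot r P' price (ops + 2 + 3 + 1)))"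

definition algorithm1 :: "real \<Rightarrow> real \<Rightarrow> ltree \<Rightarrow> real \<times> nat" where
  "algorithm1 b a T = alg_loop b a (pnorm T) T 1 0 0"

end

theory Submission
  imports Defs
begin

text \<open>The sum of exp (theta/b) over the outcomes of a node interval equals 2^K S_z times the
  product of exp (s/b) over the strict ancestors of z: each outcome collects the shares of every
  node containing it, and a leaf of width beta - alpha holds 2^K (beta - alpha) outcomes.
  Algorithm 1 walks down the path towards alpha, keeping this ancestor product in P and adding
  the mass of every right sibling lying inside [alpha, 1); at the end it adds the part of the
  final node right of alpha, which is the whole node or, at a leaf, a proportional share.
  The loop follows one root-to-leaf path, and an AVL-balanced tree of height h has at least
  2^(h div 2) leaves, hence as many distinct left endpoints.\<close>

lemma Omega_eq_image: "Omega K = (\<lambda>j. real j / 2^K) ` {..<2^K}"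
  unfolding Omega_def by auto

lemma finite_Omega: "finite (Omega K)"
  by (simp add: Omega_eq_image)

lemma Omega_subset: "Omega K \<subseteq> {0..<1}"
  unfolding Omega_def by auto

lemma grid_point_cases:
  assumes "x \<in> Omega K \<union> {1}"
  obtains i where "i \<le> 2^K" "x = real i / 2^K"
  using assms
proof
  assume "x \<in> Omega K"
  then show ?thesis
    unfolding Omega_def using that less_imp_le by blast
qed (use that[of "2^K"] in simp)

lemma card_Omega_interval:
  assumes "x \<in> Omega K \<union> {1}" "y \<in> Omega K \<union> {1}" "x \<le> y"
  shows "real (card {\<omega> \<in> Omega K. x \<le> \<omega> \<and> \<omega> < y}) = 2^K * (y - x)"
proof -
  obtain i where i: "i \<le> 2^K" "x = real i / 2^K" using grid_point_cases[OF assms(1)] .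
  obtain j where j: "j \<le> 2^K" "y = real j / 2^K" using grid_point_cases[OF assms(2)] .
  have "i \<le> j" using assms(3) i j by (simp add: divide_le_cancel)
  have "{\<omega> \<in> Omega K. x \<le> \<omega> \<and> \<omega> < y} = (\<lambda>k. real k / 2^K) ` {i..<j}"
    using i j unfolding Omega_eq_image
    by (auto simp: divide_le_cancel divide_less_cancel image_iff)
  moreover have "inj_on (\<lambda>k. real k / 2^K) {i..<j}"
    by (rule inj_onI) simp
  ultimately have "card {\<omega> \<in> Omega K. x \<le> \<omega> \<and> \<omega> < y} = j - i"
    by (simp add: card_image)
  moreover have "2^K * (y - x) = real j - real i"
    using i j by (simp add: field_simps)
  ultimately show ?thesis
    using \<open>i \<le> j\<close> by (simp add: of_nat_diff)
qed

lemma theta_outside_interval: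
  "\<not> (alpha t \<le> \<omega> \<and> \<omega> < beta t) \<Longrightarrow> wf_tree K b t \<Longrightarrow> theta t \<omega> = 0"
  by (induction t) auto

definition tail_mass :: "nat \<Rightarrow> real \<Rightarrow> ltree \<Rightarrow> real \<Rightarrow> real" where
  "tail_mass K b t x = (\<Sum>\<omega> \<in> {\<omega> \<in> Omega K. x \<le> \<omega> \<and> \<omega> < beta t}. exp (theta t \<omega> / b))"

lemma tail_mass_Leaf:
  assumes "x \<in> Omega K \<union> {1}" "az \<le> x" "x \<le> bz" "bz \<in> Omega K \<union> {1}"
  shows "tail_mass K b (Leaf az bz h s S) x = 2^K * (bz - x) * exp (s / b)"
proof -
  have "tail_mass K b (Leaf az bz h s S) x
      = real (card {\<omega> \<in> Omega K. x \<le> \<omega> \<and> \<omega> < bz}) * exp (s / b)"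
    unfolding tail_mass_def using assms(2) by (subst sum.cong[where h = "\<lambda>_. exp (s / b)"]) auto
  then show ?thesis
    using card_Omega_interval[OF assms(1,4,3)] by simp
qed

lemma theta_Node_left:
  "wf_tree K b (Node az bz h s S l r) \<Longrightarrow> alpha l \<le> \<omega> \<Longrightarrow> \<omega> < beta l \<Longrightarrow>
   theta (Node az bz h s S l r) \<omega> = s + theta l \<omega>"
  using theta_outside_interval[of r \<omega> K b] by auto

lemma theta_Node_right:
  "wf_tree K b (Node az bz h s S l r) \<Longrightarrow> alpha r \<le> \<omega> \<Longrightarrow> \<omega> < beta r \<Longrightarrow>
   theta (Node az bz h s S l r) \<omega> = s + theta r \<omega>"
  using theta_outside_interval[of l \<omega> K b] by auto

lemma tail_mass_Node_right:
  assumes "wf_tree K b (Node az bz h s S l r)" "alpha r \<le> x"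
  shows "tail_mass K b (Node az bz h s S l r) x = exp (s / b) * tail_mass K b r x"
  unfolding tail_mass_def sum_distrib_left
proof (rule sum.cong)
  fix \<omega> assume "\<omega> \<in> {\<omega> \<in> Omega K. x \<le> \<omega> \<and> \<omega> < beta r}"
  then have "theta (Node az bz h s S l r) \<omega> = s + theta r \<omega>"
    using assms by (intro theta_Node_right[OF assms(1)]) auto
  then show "exp (theta (Node az bz h s S l r) \<omega> / b) = exp (s / b) * exp (theta r \<omega> / b)"
    by (simp add: add_divide_distrib exp_add)
qed (use assms in simp)

lemma tail_mass_Node_left:
  assumes "wf_tree K b (Node az bz h s S l r)" "az \<le> x" "x \<le> beta l"
  shows "tail_mass K b (Node az bz h s S l r) x
    = exp (s / b) * (tail_mass K b l x + tail_mass K b r (alpha r))"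
proof -
  let ?T = "Node az bz h s S l r"
  let ?w = "\<lambda>t \<omega>. exp (theta t \<omega> / b)"
  let ?L = "{\<omega> \<in> Omega K. x \<le> \<omega> \<and> \<omega> < beta l}"
  let ?R = "{\<omega> \<in> Omega K. alpha r \<le> \<omega> \<and> \<omega> < beta r}"
  have split: "{\<omega> \<in> Omega K. x \<le> \<omega> \<and> \<omega> < bz} = ?L \<union> ?R"
    using assms by auto
  have "tail_mass K b ?T x = (\<Sum>\<omega> \<in> ?L. ?w ?T \<omega>) + (\<Sum>\<omega> \<in> ?R. ?w ?T \<omega>)"
    unfolding tail_mass_def beta.simps split
    using assms finite_Omega by (intro sum.union_disjoint) auto
  also have "(\<Sum>\<omega> \<in> ?L. ?w ?T \<omega>) = (\<Sum>\<omega> \<in> ?L. exp (s / b) * ?w l \<omega>)"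
    using assms theta_Node_left[OF assms(1)]
    by (intro sum.cong refl) (simp add: add_divide_distrib exp_add)
  also have "(\<Sum>\<omega> \<in> ?R. ?w ?T \<omega>) = (\<Sum>\<omega> \<in> ?R. exp (s / b) * ?w r \<omega>)"
    using theta_Node_right[OF assms(1)]
    by (intro sum.cong refl) (simp add: add_divide_distrib exp_add)
  finally show ?thesis
    unfolding tail_mass_def by (simp add: sum_distrib_left distrib_left)
qed

lemma tail_mass_alpha:
  "wf_tree K b t \<Longrightarrow> alpha t < beta t \<Longrightarrow> tail_mass K b t (alpha t) = 2^K * pnorm t"
proof (induction t)
  case (Leaf az bz h s S)
  then show ?case by (simp add: tail_mass_Leaf)
next
  case (Node az bz h s S l r)
  then show ?case
    using tail_mass_Node_left[OF Node.prems(1), of az] by (simp add: algebra_simps)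
qed

lemma alg_loop_price:
  "wf_tree K b t \<Longrightarrow> a \<in> Omega K \<Longrightarrow> alpha t \<le> a \<Longrightarrow> a < beta t \<Longrightarrow>
   fst (alg_loop b a R t P price ops) = price + P * (tail_mass K b t a / 2^K) / R"
proof (induction t arbitrary: P price ops)
  case (Leaf az bz h s S)
  have S: "S = exp (s / b) * (bz - az)" and "bz - az \<noteq> 0"
    using Leaf by auto
  then show ?case
    using Leaf by (cases "R = 0") (simp_all add: tail_mass_Leaf S field_simps)
next
  case (Node az bz h s S l r)
  note wf = Node.prems(1)
  consider "az = a" | "az \<noteq> a" "a < alpha r" | "az \<noteq> a" "\<not> a < alpha r"
    by blast
  then show ?case
  proof cases
    case 1
    then show ?thesis
      using tail_mass_alpha[OF wf] Node.prems by simp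
  next
    case 2
    have "tail_mass K b (Node az bz h s S l r) a = exp (s / b) * (tail_mass K b l a + 2^K * pnorm r)"
      using tail_mass_Node_left[OF wf, of a] tail_mass_alpha[of K b r] wf Node.prems 2 by simp
    then show ?thesis
      using 2 Node.IH(1)[of "P * exp (s / b)"] wf Node.prems
      by (cases "R = 0") (auto simp: Let_def field_simps)
  next
    case 3
    then show ?thesis
      using Node.IH(2)[of "P * exp (s / b)"] tail_mass_Node_right[OF wf, of a] wf Node.prems
      by (auto simp: Let_def)
  qed
qed

lemma alg_loop_ops:
  "wf_tree K b t \<Longrightarrow> snd (alg_loop b a R t P price ops) \<le> ops + 9 * (hgt t + 1)"
proof (induction t arbitrary: P price ops)
  case (Leaf az bz h s S)
  then show ?case by simp
next
  case (Node az bz h s S l r)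
  then have "h = 1 + max (hgt l) (hgt r)"
    by simp
  with Node show ?case
    by (fastforce simp: Let_def intro: order_trans[OF Node.IH(1)] order_trans[OF Node.IH(2)])
qed

lemma alpha_in_alphas: "alpha t \<in> alphas t"
  by (cases t) auto

lemma alphas_subset: "wf_tree K b t \<Longrightarrow> alpha t < beta t \<Longrightarrow> alphas t \<subseteq> {alpha t..<beta t}"
  by (induction t) fastforce+

lemma finite_alphas: "finite (alphas t)"
  by (induction t) auto

text \<open>Balance: both subtrees of a node of height h have height at least h - 2.\<close>
lemma pow_half_height_le:
  assumes "\<bar>int p - int q\<bar> \<le> 1"
  shows "(2::nat) ^ ((1 + max p q) div 2) \<le> 2 ^ (p div 2) + 2 ^ (q div 2)"
proof -
  define k where "k = (1 + max p q) div 2"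
  have "k \<le> p div 2 \<or> k \<le> q div 2 \<or> (0 < k \<and> k - 1 \<le> p div 2 \<and> k - 1 \<le> q div 2)"
    using assms unfolding k_def by (auto simp: max_def)
  moreover have "(2::nat) ^ k \<le> 2 ^ m" if "k \<le> m" for m
    using that by (rule power_increasing) simp
  moreover have "(2::nat) ^ k = 2 ^ (k - 1) + 2 ^ (k - 1)" if "0 < k"
    using that by (cases k) auto
  moreover have "(2::nat) ^ (k - 1) \<le> 2 ^ m" if "k - 1 \<le> m" for m
    using that by (rule power_increasing) simp
  ultimately show ?thesis
    unfolding k_def[symmetric] by (metis add_mono trans_le_add1 trans_le_add2)
qed

lemma card_alphas_ge:
  "wf_tree K b t \<Longrightarrow> alpha t < beta t \<Longrightarrow> 2 ^ (hgt t div 2) \<le> card (alphas t)"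
proof (induction t)
  case (Leaf az bz h s S)
  then show ?case by simp
next
  case (Node az bz h s S l r)
  then have "alphas l \<inter> alphas r = {}"
    using alphas_subset[of K b l] alphas_subset[of K b r] by fastforce
  moreover have "alphas (Node az bz h s S l r) = alphas l \<union> alphas r"
    using alpha_in_alphas[of l] Node.prems by auto
  ultimately have "card (alphas (Node az bz h s S l r)) = card (alphas l) + card (alphas r)"
    by (simp add: card_Un_disjoint finite_alphas)
  then show ?case
    using Node pow_half_height_le[of "hgt l" "hgt r"] by fastforce
qed

lemma height_le_log_card:
  assumes "(2::nat) ^ (h div 2) \<le> c"
  shows "real h \<le> 2 * log 2 (real c) + 1"
proof -
  have "real (h div 2) = log 2 (2 ^ (h div 2))"
    by simp
  also have "\<dots> \<le> log 2 (real c)"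
    using assms order_trans[OF one_le_power[of "2::nat"] assms]
    by (subst log_le_cancel_iff) (auto simp flip: of_nat_le_iff)
  finally show ?thesis
    by linarith
qed

theorem theorem1:
  "\<exists>C::real. \<forall>(K::nat) (b::real) (T::ltree) (a::real).
     K \<ge> 1 \<and> b > 0 \<and> lmsr_tree K b T \<and> a \<in> Omega K \<longrightarrow>
       fst (algorithm1 b a T) = lmsr_price K b (theta T) {\<omega> \<in> Omega K. a \<le> \<omega> \<and> \<omega> < 1} \<and>
       real (snd (algorithm1 b a T)) \<le> C * (1 + log 2 (real (card (alphas T))))"
proof (intro exI[of _ 18] allI impI conjI)
  fix K b T a
  assume "K \<ge> 1 \<and> b > 0 \<and> lmsr_tree K b T \<and> a \<in> Omega K"
  then have wf: "wf_tree K b T" and root: "alpha T = 0" "beta T = 1" and a: "a \<in> Omega K"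
    unfolding lmsr_tree_def by auto
  have "{\<omega> \<in> Omega K. 0 \<le> \<omega> \<and> \<omega> < 1} = Omega K"
    using Omega_subset[of K] by auto
  then have "lmsr_price K b (theta T) {\<omega> \<in> Omega K. a \<le> \<omega> \<and> \<omega> < 1}
      = tail_mass K b T a / tail_mass K b T 0"
    unfolding lmsr_price_def tail_mass_def root by simp
  also have "\<dots> = fst (algorithm1 b a T)"
    using alg_loop_price[OF wf a] tail_mass_alpha[OF wf] subsetD[OF Omega_subset a] root
    unfolding algorithm1_def by auto
  finally show "fst (algorithm1 b a T) = lmsr_price K b (theta T) {\<omega> \<in> Omega K. a \<le> \<omega> \<and> \<omega> < 1}" ..
  have "real (snd (algorithm1 b a T)) \<le> 9 * (real (hgt T) + 1)"
    using alg_loop_ops[OF wf, of a "pnorm T" 1 0 0]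
    unfolding algorithm1_def by (simp flip: of_nat_le_iff)
  also have "\<dots> \<le> 18 * (1 + log 2 (real (card (alphas T))))"
    using height_le_log_card[OF card_alphas_ge[OF wf]] root by simp
  finally show "real (snd (algorithm1 b a T)) \<le> 18 * (1 + log 2 (real (card (alphas T))))" .
qed

end
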